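(* Let $M$ be an $\mathfrak{S}$-module, $\mathfrak{S}=\mathbb{Z}[t]/(t^p-1)$, with $\operatorname{im}(1-t)=M$. Then $N(t)=0$ on $M$ and $\ker(1-t)$ is a $\mathbb{Z}/p$-vector space. Let $(e_i)_{i\in I}$ be a basis of $\ker(1-t)$. Then there is an injective $\mathfrak{S}$-module map $\psi\colon\bigoplus_{i\in I}\mathbb{Z}[\vartheta,1/p]/(1-\vartheta)\mathbb{Z}[\vartheta]\to M$ with uniquely $p$-divisible cokernel.
   Context: $p$ is a prime, $N(t)=1+t+\dots+t^{p-1}$, $\vartheta$ is a primitive $p$-th root of unity, so $\mathbb{Z}[\vartheta]\cong\mathbb{Z}[t]/(N(t))$; $t$ acts on $\mathbb{Z}[\vartheta,1/p]/(1-\vartheta)\mathbb{Z}[\vartheta]$ by multiplication with $\vartheta$. Uniquely $p$-divisible means multiplication by $p$ is bijective. *)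

theory Defs
  imports Complex_Main "HOL-Computational_Algebra.Polynomial"
begin

definition theta :: "nat \<Rightarrow> complex" where
  "theta p = cis (2 * pi / real p)"

definition Ztheta :: "nat \<Rightarrow> complex set" where
  "Ztheta p = {poly (map_poly of_int f) (theta p) | f :: int poly. True}"

definition Ztheta_inv_p :: "nat \<Rightarrow> complex set" where
  "Ztheta_inv_p p = {z / of_nat p ^ k | z k. z \<in> Ztheta p}"

definition one_minus_theta_Ztheta :: "nat \<Rightarrow> complex set" where
  "one_minus_theta_Ztheta p = {(1 - theta p) * z | z. z \<in> Ztheta p}"

text \<open>Representatives of the direct sum over I of Z[theta,1/p]:
  finitely supported families with support in I.\<close>
definition dsum_rep :: "nat \<Rightarrow> 'i set \<Rightarrow> ('i \<Rightarrow> complex) set" where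
  "dsum_rep p I = {f. finite {i. f i \<noteq> 0} \<and> (\<forall>i. f i \<noteq> 0 \<longrightarrow> i \<in> I)
                      \<and> (\<forall>i. f i \<in> Ztheta_inv_p p)}"

definition nmul :: "nat \<Rightarrow> 'a::ab_group_add \<Rightarrow> 'a" where
  "nmul n x = (\<Sum>_<n. x)"

text \<open>An S-module, S = Z[t]/(t^p - 1): an abelian group with an additive
  endomorphism T satisfying T^p = id.\<close>
definition S_module :: "nat \<Rightarrow> ('a::ab_group_add \<Rightarrow> 'a) \<Rightarrow> bool" where
  "S_module p T \<longleftrightarrow> (\<forall>x y. T (x + y) = T x + T y) \<and> (T ^^ p = id)"

text \<open>(e_i)_{i in I} is a Z/p-basis of ker(1 - T) (coefficients in Z/p
  represented by 0..p-1).\<close>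
definition is_Zp_basis_of_fix :: "nat \<Rightarrow> ('a::ab_group_add \<Rightarrow> 'a) \<Rightarrow> 'i set \<Rightarrow> ('i \<Rightarrow> 'a) \<Rightarrow> bool" where
  "is_Zp_basis_of_fix p T I e \<longleftrightarrow>
     (\<forall>i\<in>I. T (e i) = e i) \<and>
     (\<forall>x. T x = x \<longrightarrow>
        (\<exists>!c :: 'i \<Rightarrow> nat. (\<forall>i. c i < p) \<and> (\<forall>i. c i \<noteq> 0 \<longrightarrow> i \<in> I) \<and> finite {i. c i \<noteq> 0}
            \<and> x = (\<Sum>i\<in>{i. c i \<noteq> 0}. nmul (c i) (e i))))"

text \<open>The subset A of M (an image of a module map) has uniquely p-divisible
  cokernel M/A: multiplication by p is bijective on M/A.\<close>
definition uniquely_p_divisible_cokernel :: "nat \<Rightarrow> 'a::ab_group_add set \<Rightarrow> bool" where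
  "uniquely_p_divisible_cokernel p A \<longleftrightarrow>
     (\<forall>x. \<exists>y. nmul p y - x \<in> A) \<and> (\<forall>y. nmul p y \<in> A \<longrightarrow> y \<in> A)"

end

theory Submission
  imports Defs "HOL-Computational_Algebra.Polynomial_Factorial"
begin

text \<open>
  Since \<open>N(t) (1 - t) = 1 - t\<^sup>p\<close>, \<open>N(T)\<close> kills the image of \<open>1 - T\<close>, which is all of \<open>M\<close>.
  As \<open>N\<close> is irreducible (Eisenstein at \<open>p\<close> for \<open>N(x + 1)\<close>), it generates the kernel of
  \<open>\<int>[x] \<rightarrow> \<int>[\<theta>]\<close>, so \<open>M\<close> is a \<open>\<int>[\<theta>]\<close>-module with \<open>\<theta>\<close> acting as \<open>T\<close>.
  Because \<open>(1 - \<theta>)\<^sup>p\<^sup>-\<^sup>1 \<in> p \<int>[\<theta>]\<close> and \<open>p \<in> (1 - \<theta>) \<int>[\<theta>]\<close>, every element of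
  \<open>\<int>[\<theta>, 1/p]\<close> has the form \<open>a / (1 - \<theta>)\<^sup>n\<close> with \<open>a \<in> \<int>[\<theta>]\<close>.  Choosing successive
  \<open>(1 - T)\<close>-preimages \<open>e\<^sub>i\<^sub>,\<^sub>n\<close> of the basis vectors \<open>e\<^sub>i\<close>, \<open>\<psi>\<close> sends \<open>a / (1 - \<theta>)\<^sup>n\<close> in
  the \<open>i\<close>-th summand to \<open>a e\<^sub>i\<^sub>,\<^sub>n\<close>.  Since \<open>\<int>[\<theta>] / (1 - \<theta>) = \<int>/p\<close> and the \<open>e\<^sub>i\<close> are
  independent over \<open>\<int>/p\<close>, induction on \<open>n\<close> shows that the kernel of \<open>\<psi>\<close> is the direct
  sum of the \<open>(1 - \<theta>) \<int>[\<theta>]\<close>, and that everything killed by a power of \<open>1 - \<theta>\<close> lies in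
  the image; as \<open>(1 - \<theta>)\<^sup>p\<^sup>-\<^sup>1\<close> is a multiple of \<open>p\<close> in \<open>\<int>[\<theta>]\<close>, this gives the unique
  \<open>p\<close>-divisibility of the cokernel.
\<close>

section \<open>\<open>N\<close> is the minimal polynomial of \<open>\<theta>\<close>\<close>

lemma prime_not_dvd_coeff_mult:
  fixes g h :: "int poly" and q :: int
  assumes "prime q" and "\<not> q dvd coeff h 0" and "\<not> q dvd coeff g i"
  shows "\<exists>k\<le>i. \<not> q dvd coeff (g * h) k"
proof -
  define j where "j = (LEAST j. \<not> q dvd coeff g j)"
  have j: "\<not> q dvd coeff g j" "j \<le> i"
    unfolding j_def by (rule LeastI[of _ i], rule assms(3), rule Least_le, rule assms(3))
  have below: "q dvd coeff g l" if "l < j" for l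
    using that not_less_Least unfolding j_def by blast
  have "coeff (g * h) j = (\<Sum>l<j. coeff g l * coeff h (j - l)) + coeff g j * coeff h 0"
    by (simp add: coeff_mult lessThan_Suc_atMost[symmetric])
  moreover have "q dvd (\<Sum>l<j. coeff g l * coeff h (j - l))"
    by (intro dvd_sum) (simp add: below)
  moreover have "\<not> q dvd coeff g j * coeff h 0"
    using assms(1,2) j(1) by (simp add: prime_dvd_mult_iff)
  ultimately have "\<not> q dvd coeff (g * h) j"
    by (simp add: dvd_add_right_iff)
  with j(2) show ?thesis by blast
qed

lemma eisenstein_criterion:
  fixes f g h :: "int poly" and q :: int
  assumes "prime q" and "f = g * h"
    and "\<not> q dvd lead_coeff f" and "\<forall>k<degree f. q dvd coeff f k"
    and "\<not> q\<^sup>2 dvd coeff f 0"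
  shows "degree g = 0 \<or> degree h = 0"
proof (rule ccontr)
  assume "\<not> (degree g = 0 \<or> degree h = 0)"
  then have "g \<noteq> 0" "h \<noteq> 0" "degree g > 0" "degree h > 0"
    by auto
  then have deg: "degree f = degree g + degree h" "degree g > 0" "degree h > 0"
    using assms(2) by (simp_all add: degree_mult_eq)
  have lead: "\<not> q dvd lead_coeff g" "\<not> q dvd lead_coeff h"
    using assms(2,3) by (auto simp: lead_coeff_mult)
  have "\<not> q dvd coeff h 0 \<or> \<not> q dvd coeff g 0"
    using assms(2,5) by (auto simp: power2_eq_square coeff_mult_0 intro: mult_dvd_mono)
  then obtain k where "k < degree f" "\<not> q dvd coeff f k"
  proof (elim disjE)
    assume "\<not> q dvd coeff h 0"
    then obtain k where "k \<le> degree g" "\<not> q dvd coeff f k"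
      using prime_not_dvd_coeff_mult[OF assms(1) _ lead(1)] assms(2) by blast
    with deg show thesis by (intro that[of k]) auto
  next
    assume "\<not> q dvd coeff g 0"
    then obtain k where "k \<le> degree h" "\<not> q dvd coeff f k"
      using prime_not_dvd_coeff_mult[OF assms(1) _ lead(2)] assms(2) by (auto simp: mult.commute)
    with deg show thesis by (intro that[of k]) auto
  qed
  with assms(4) show False by blast
qed

definition N_poly :: "nat \<Rightarrow> int poly" where
  "N_poly n = (\<Sum>k<n. monom 1 k)"

lemma coeff_N_poly: "coeff (N_poly n) k = (if k < n then 1 else 0)"
  by (simp add: N_poly_def coeff_sum)

lemma degree_N_poly: "degree (N_poly n) = n - 1"
proof (cases "n = 0")
  case False
  then show ?thesis
    by (intro antisym degree_le le_degree) (auto simp: coeff_N_poly)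
qed (simp add: N_poly_def)

lemma lead_coeff_N_poly: "n > 0 \<Longrightarrow> lead_coeff (N_poly n) = 1"
  by (simp add: degree_N_poly coeff_N_poly)

lemma N_poly_mult_X_minus_1: "N_poly n * [:-1, 1:] = monom 1 n - 1"
proof -
  have "N_poly n * [:-1, 1:] = (\<Sum>k<n. monom 1 (Suc k) - monom 1 k)"
    unfolding N_poly_def sum_distrib_right
    by (intro sum.cong) (simp_all add: monom_Suc algebra_simps monom_0 flip: smult_monom)
  also have "\<dots> = monom 1 n - 1"
    by (simp add: sum_lessThan_telescope monom_0 one_pCons)
  finally show ?thesis .
qed

lemma coeff_N_poly_shift:
  assumes "k < n"
  shows "coeff (pcompose (N_poly n) [:1, 1:]) k = int (n choose Suc k)"
proof -
  have "pcompose (monom 1 n) [:1, 1:] = [:1, 1::int:] ^ n"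
    by (rule poly_eq_poly_eq_iff[THEN iffD1]) (simp add: poly_pcompose poly_monom fun_eq_iff)
  then have "pcompose (N_poly n * [:-1, 1:]) [:1, 1:] = [:1, 1:] ^ n - 1"
    unfolding N_poly_mult_X_minus_1 pcompose_diff pcompose_1 by simp
  moreover have "pcompose [:-1, 1:] [:1, 1::int:] = [:0, 1:]"
    by (simp add: pcompose_pCons)
  ultimately have "pCons 0 (pcompose (N_poly n) [:1, 1:]) = [:1, 1:] ^ n - 1"
    by (simp only: pcompose_mult) (simp add: mult.commute)
  then have "coeff (pcompose (N_poly n) [:1, 1:]) k = coeff ([:1, 1:] ^ n - 1) (Suc k)"
    by (metis coeff_pCons_Suc)
  with assms show ?thesis
    by (simp add: coeff_linear_poly_power)
qed

lemma irreducible_N_poly: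
  assumes "prime p"
  shows "irreducible (N_poly p)"
proof (rule irreducibleI)
  have p: "p \<ge> 2"
    using assms by (rule prime_ge_2_nat)
  then show "N_poly p \<noteq> 0" "\<not> N_poly p dvd 1"
    by (auto simp: is_unit_poly_iff degree_N_poly dest!: arg_cong[of _ _ degree])
  fix g h assume gh: "N_poly p = g * h"
  have "lead_coeff g * lead_coeff h = 1"
    using gh p by (metis lead_coeff_mult lead_coeff_N_poly less_le_trans pos2)
  then have units: "lead_coeff g dvd 1" "lead_coeff h dvd 1"
    by (metis dvd_triv_left, metis dvd_triv_right)
  define shift :: "int poly \<Rightarrow> int poly" where "shift f = pcompose f [:1, 1:]" for f
  have "shift (N_poly p) = shift g * shift h"
    by (simp add: shift_def gh pcompose_mult)
  moreover have "degree (shift (N_poly p)) = p - 1" "lead_coeff (shift (N_poly p)) = 1"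
    using p lead_coeff_comp[of "[:1, 1:]" "N_poly p"]
    by (simp_all add: shift_def degree_pcompose degree_N_poly coeff_N_poly)
  moreover have "\<forall>k<p - 1. int p dvd coeff (shift (N_poly p)) k"
    using assms by (auto simp: shift_def coeff_N_poly_shift intro: dvd_choose_prime)
  moreover have "\<not> (int p)\<^sup>2 dvd coeff (shift (N_poly p)) 0"
  proof -
    have "coeff (shift (N_poly p)) 0 = int p * 1"
      using p coeff_N_poly_shift[of 0 p] by (simp add: shift_def)
    with p show ?thesis
      by (simp only: power2_eq_square dvd_mult_cancel_left) simp
  qed
  ultimately have "degree (shift g) = 0 \<or> degree (shift h) = 0"
    using eisenstein_criterion[of "int p"] assms p by auto
  then have "degree g = 0 \<or> degree h = 0"
    by (simp add: shift_def degree_pcompose)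
  then show "g dvd 1 \<or> h dvd 1"
    using units by (metis degree_0_id is_unit_const_poly_iff)
qed

lemma N_poly_shift_mod_p:
  assumes "prime p"
  obtains G where "pcompose (N_poly p) [:1, 1:] = monom 1 (p - 1) + smult (int p) G"
proof -
  let ?F = "pcompose (N_poly p) [:1, 1:]"
  have "int p dvd coeff (?F - monom 1 (p - 1)) k" for k
  proof (cases "k < p")
    case True
    then show ?thesis
      using assms by (auto simp: coeff_N_poly_shift intro: dvd_choose_prime)
  next
    case False
    moreover have "p > 0"
      using assms by (rule prime_gt_0_nat)
    ultimately have "coeff ?F k = 0"
      by (intro coeff_eq_0) (simp add: degree_pcompose degree_N_poly)
    with False \<open>p > 0\<close> show ?thesis
      by (cases "k = p - 1") simp_all
  qed
  then obtain G where "?F - monom 1 (p - 1) = [:int p:] * G"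
    by (metis const_poly_dvd_iff dvdE)
  then show thesis
    by (intro that[of G]) (simp add: algebra_simps)
qed

definition ipoly :: "int poly \<Rightarrow> 'a::comm_ring_1 \<Rightarrow> 'a" where
  "ipoly f z = poly (map_poly of_int f) z"

lemma ipoly_0 [simp]: "ipoly 0 z = 0"
  by (simp add: ipoly_def)

lemma ipoly_add: "ipoly (f + g) z = ipoly f z + ipoly g z"
proof -
  have "map_poly of_int (f + g) = map_poly of_int f + (map_poly of_int g :: 'a poly)"
    by (intro poly_eqI) (simp add: coeff_map_poly)
  then show ?thesis by (simp add: ipoly_def)
qed

lemma ipoly_mult: "ipoly (f * g) z = ipoly f z * ipoly g z"
proof -
  have "map_poly of_int (f * g) = map_poly of_int f * (map_poly of_int g :: 'a poly)"
    by (intro poly_eqI) (simp add: coeff_map_poly coeff_mult)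
  then show ?thesis by (simp add: ipoly_def)
qed

lemma ipoly_diff: "ipoly (f - g) z = ipoly f z - ipoly g z"
  by (metis add_diff_cancel diff_add_cancel ipoly_add)

lemma ipoly_pCons: "ipoly (pCons c f) z = of_int c + z * ipoly f z"
  by (simp add: ipoly_def map_poly_pCons)

lemma ipoly_const: "ipoly [:c:] z = of_int c"
  using ipoly_pCons[of c 0 z] by (simp add: ipoly_def)

lemma ipoly_smult: "ipoly (smult c f) z = of_int c * ipoly f z"
  by (metis ipoly_const ipoly_mult mult_smult_left mult_1 smult_one)

lemma ipoly_sum: "ipoly (\<Sum>i\<in>A. f i) z = (\<Sum>i\<in>A. ipoly (f i) z)"
  by (induction A rule: infinite_finite_induct) (simp_all add: ipoly_add)

lemma ipoly_monom: "ipoly (monom c n) z = of_int c * z ^ n"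
  by (simp add: ipoly_def map_poly_monom poly_monom)

lemma ipoly_pcompose: "ipoly (pcompose f g) z = ipoly f (ipoly g z)"
  by (induction f) (simp_all add: pcompose_pCons ipoly_add ipoly_mult ipoly_const ipoly_pCons)

lemma of_int_ipoly: "of_int (ipoly f k) = ipoly f (of_int k)"
  by (induction f) (simp_all add: ipoly_pCons)

lemma degree_pos_if_ipoly_root:
  fixes z :: "'a::{comm_ring_1, ring_char_0}"
  assumes "f \<noteq> 0" and "ipoly f z = 0"
  shows "degree f > 0"
  using assms by (metis degree_0_id gr0I ipoly_const of_int_eq_0_iff pCons_eq_0_iff)

lemma min_degree_root_dvd_multiple:
  fixes m g :: "int poly" and z :: "'a::{idom, ring_char_0}"
  assumes "m \<noteq> 0" and "ipoly m z = 0"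
    and min: "\<And>h. h \<noteq> 0 \<Longrightarrow> ipoly h z = 0 \<Longrightarrow> degree m \<le> degree h"
    and "ipoly g z = 0"
  shows "\<exists>c q. c \<noteq> 0 \<and> smult c g = m * q"
proof -
  obtain c q where cq: "c \<noteq> 0" "smult c g = m * q + pseudo_mod g m"
    using pseudo_mod(1)[of m g] assms(1) by blast
  have "ipoly (pseudo_mod g m) z = 0"
    using arg_cong[OF cq(2), of "\<lambda>h. ipoly h z"] assms(2,4)
    by (simp add: ipoly_add ipoly_mult ipoly_smult)
  moreover have "pseudo_mod g m = 0 \<or> degree (pseudo_mod g m) < degree m"
    using pseudo_mod(2)[of m g] assms(1) by blast
  ultimately have "pseudo_mod g m = 0"
    using min[of "pseudo_mod g m"] by linarith
  with cq show ?thesis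
    by auto
qed

lemma prime_elem_dvd_if_common_root:
  fixes P f :: "int poly" and z :: "'a::{idom, ring_char_0}"
  assumes P: "prime_elem P" "ipoly P z = 0" and f: "ipoly f z = 0"
  shows "P dvd f"
proof -
  have "P \<noteq> 0"
    using P(1) by (rule prime_elem_not_zeroI)
  obtain m where m: "m \<noteq> 0" "ipoly m z = 0"
    and least: "\<And>h. h \<noteq> 0 \<Longrightarrow> ipoly h z = 0 \<Longrightarrow> degree m \<le> degree h"
    using ex_has_least_nat[of "\<lambda>m. m \<noteq> 0 \<and> ipoly m z = 0" P degree] P(2) \<open>P \<noteq> 0\<close> by blast
  have m_dvd: "\<exists>c q. c \<noteq> 0 \<and> smult c g = m * q" if "ipoly g z = 0" for g
    using m least that by (rule min_degree_root_dvd_multiple)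
  have "P dvd m"
  proof -
    obtain c q where c: "c \<noteq> 0" and "smult c P = m * q"
      using m_dvd[OF P(2)] by blast
    moreover have "\<not> P dvd q"
    proof
      assume "P dvd q"
      then obtain q' where "q = P * q'" ..
      with \<open>smult c P = m * q\<close> have "[:c:] * P = (m * q') * P"
        by (simp add: ac_simps)
      with \<open>P \<noteq> 0\<close> have "[:c:] = m * q'"
        by (metis mult_cancel_right)
      with c m have "degree m = 0"
        by (metis degree_mult_eq degree_pCons_0 add_is_0 mult_zero_right pCons_eq_0_iff)
      with m show False
        using degree_pos_if_ipoly_root[of m z] by simp
    qed
    moreover have "P dvd m * q"
      unfolding \<open>smult c P = m * q\<close>[symmetric] by (rule dvd_smult) simp
    ultimately show ?thesis
      using prime_elem_dvd_mult_iff[OF P(1)] by blast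
  qed
  moreover obtain c q where "c \<noteq> 0" "smult c f = m * q"
    using m_dvd[OF f] by blast
  ultimately have "P dvd [:c:] * f"
    by (metis dvd_mult2 mult_smult_left mult_1 smult_one)
  moreover have "\<not> P dvd [:c:]"
  proof
    assume "P dvd [:c:]"
    with \<open>c \<noteq> 0\<close> have "degree P = 0"
      using dvd_imp_degree_le[of P "[:c:]"] by simp
    with P \<open>P \<noteq> 0\<close> show False
      using degree_pos_if_ipoly_root[of P z] by simp
  qed
  ultimately show ?thesis
    using prime_elem_dvd_mult_iff[OF P(1)] by blast
qed

lemma theta_pow_p: "p > 0 \<Longrightarrow> theta p ^ p = 1"
  by (simp add: theta_def DeMoivre)

lemma theta_ne_1:
  assumes "p \<ge> 2"
  shows "theta p \<noteq> 1"
proof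
  assume "theta p = 1"
  then have "cos (2 * pi / real p) = 1"
    unfolding theta_def by (metis cis.sel(1) one_complex.sel(1))
  then obtain n :: int where "2 * pi / real p = n * 2 * pi"
    by (auto simp: cos_one_2pi_int)
  with assms have "real_of_int n * real p = 1"
    by (simp add: field_simps)
  then have "n * int p = 1"
    by (metis of_int_1 of_int_eq_iff of_int_mult of_int_of_nat_eq)
  then have "int p dvd 1"
    by (metis dvd_triv_right)
  with assms show False
    by simp
qed

lemma ipoly_N_poly_theta:
  assumes "p \<ge> 2"
  shows "ipoly (N_poly p) (theta p) = 0"
proof -
  have "ipoly (N_poly p) (theta p) = (\<Sum>k<p. theta p ^ k)"
    by (simp add: N_poly_def ipoly_sum ipoly_monom)
  also have "\<dots> = (theta p ^ p - 1) / (theta p - 1)"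
    using theta_ne_1[OF assms] by (rule geometric_sum)
  finally show ?thesis
    using assms by (simp add: theta_pow_p)
qed

lemma N_poly_dvd_if_theta_root:
  assumes "prime p" and "ipoly f (theta p) = 0"
  shows "N_poly p dvd f"
proof (rule prime_elem_dvd_if_common_root)
  show "prime_elem (N_poly p)"
    using irreducible_N_poly[OF assms(1)] by (rule irreducible_imp_prime_elem)
  show "ipoly (N_poly p) (theta p) = 0"
    using prime_ge_2_nat[OF assms(1)] by (rule ipoly_N_poly_theta)
qed (rule assms(2))

section \<open>The ring \<open>\<int>[\<theta>]\<close>\<close>

lemma Ztheta_iff: "z \<in> Ztheta p \<longleftrightarrow> (\<exists>f. z = ipoly f (theta p))"
  by (auto simp: Ztheta_def ipoly_def)

lemma ZthetaE:
  assumes "z \<in> Ztheta p"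
  obtains f where "z = ipoly f (theta p)"
  using assms by (auto simp: Ztheta_iff)

lemma Ztheta_ipoly [simp, intro]: "ipoly f (theta p) \<in> Ztheta p"
  by (auto simp: Ztheta_iff)

lemma Ztheta_add [intro]: "z \<in> Ztheta p \<Longrightarrow> w \<in> Ztheta p \<Longrightarrow> z + w \<in> Ztheta p"
  by (auto simp: Ztheta_iff ipoly_add[symmetric])

lemma Ztheta_diff [intro]: "z \<in> Ztheta p \<Longrightarrow> w \<in> Ztheta p \<Longrightarrow> z - w \<in> Ztheta p"
  by (auto simp: Ztheta_iff ipoly_diff[symmetric])

lemma Ztheta_mult [intro]: "z \<in> Ztheta p \<Longrightarrow> w \<in> Ztheta p \<Longrightarrow> z * w \<in> Ztheta p"
  by (auto simp: Ztheta_iff ipoly_mult[symmetric])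

lemma Ztheta_of_int [simp, intro]: "of_int k \<in> Ztheta p"
  by (metis Ztheta_ipoly ipoly_const)

lemma Ztheta_of_nat [simp, intro]: "of_nat n \<in> Ztheta p"
  by (metis Ztheta_of_int of_int_of_nat_eq)

lemma Ztheta_0 [simp, intro]: "0 \<in> Ztheta p"
  using Ztheta_of_nat[of 0] by simp

lemma Ztheta_1 [simp, intro]: "1 \<in> Ztheta p"
  using Ztheta_of_nat[of 1] by simp

lemma Ztheta_minus [intro]: "z \<in> Ztheta p \<Longrightarrow> - z \<in> Ztheta p"
  using Ztheta_diff[of 0 p z] by simp

lemma Ztheta_theta [simp, intro]: "theta p \<in> Ztheta p"
  using Ztheta_ipoly[of "[:0, 1:]" p] by (simp add: ipoly_pCons ipoly_const)

lemma Ztheta_pow [intro]: "z \<in> Ztheta p \<Longrightarrow> z ^ n \<in> Ztheta p"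
  by (induction n) auto

lemma Ztheta_one_minus_theta [simp]: "1 - theta p \<in> Ztheta p"
  by auto

lemma one_minus_theta_ZthetaI: "r \<in> Ztheta p \<Longrightarrow> (1 - theta p) * r \<in> one_minus_theta_Ztheta p"
  by (auto simp: one_minus_theta_Ztheta_def)

lemma one_minus_theta_ZthetaE:
  assumes "z \<in> one_minus_theta_Ztheta p"
  obtains r where "r \<in> Ztheta p" and "z = (1 - theta p) * r"
  using assms by (auto simp: one_minus_theta_Ztheta_def)

lemma one_minus_theta_Ztheta_subset: "one_minus_theta_Ztheta p \<subseteq> Ztheta p"
  by (auto elim: one_minus_theta_ZthetaE)

lemma one_minus_theta_Ztheta_add:
  "z \<in> one_minus_theta_Ztheta p \<Longrightarrow> w \<in> one_minus_theta_Ztheta p \<Longrightarrow>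
    z + w \<in> one_minus_theta_Ztheta p"
  by (elim one_minus_theta_ZthetaE) (metis one_minus_theta_ZthetaI Ztheta_add distrib_left)

lemma one_minus_theta_Ztheta_mult:
  "r \<in> Ztheta p \<Longrightarrow> z \<in> one_minus_theta_Ztheta p \<Longrightarrow> r * z \<in> one_minus_theta_Ztheta p"
  by (elim one_minus_theta_ZthetaE) (metis one_minus_theta_ZthetaI Ztheta_mult mult.left_commute)

lemma ipoly_theta_minus_ipoly_1: "ipoly f (theta p) - ipoly f 1 \<in> one_minus_theta_Ztheta p"
proof (induction f)
  case 0
  show ?case
    using one_minus_theta_ZthetaI[OF Ztheta_0] by simp
next
  case (pCons c f)
  have eq: "ipoly (pCons c f) (theta p) - ipoly (pCons c f) 1
      = theta p * (ipoly f (theta p) - ipoly f 1) + (1 - theta p) * - ipoly f 1"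
    by (simp add: ipoly_pCons algebra_simps)
  have "- ipoly f (1::complex) \<in> Ztheta p"
    using Ztheta_of_int[of "- ipoly f 1" p] by (simp add: of_int_ipoly)
  then show ?case
    unfolding eq
    by (intro one_minus_theta_Ztheta_add one_minus_theta_Ztheta_mult one_minus_theta_ZthetaI
        pCons.IH Ztheta_theta)
qed

lemma Ztheta_cong_int:
  assumes "z \<in> Ztheta p"
  obtains n :: int where "z - of_int n \<in> one_minus_theta_Ztheta p"
proof -
  obtain f where "z = ipoly f (theta p)"
    using assms by (auto simp: Ztheta_iff)
  then show thesis
    using that[of "ipoly f 1"] ipoly_theta_minus_ipoly_1[of f p] by (simp add: of_int_ipoly)
qed

lemma of_nat_p_in_one_minus_theta_Ztheta:
  assumes "p \<ge> 2"
  shows "of_nat p \<in> one_minus_theta_Ztheta p"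
proof -
  have "ipoly (N_poly p) (1::complex) = of_nat p"
    by (simp add: N_poly_def ipoly_sum ipoly_monom)
  then show ?thesis
    using ipoly_theta_minus_ipoly_1[of "N_poly p" p] one_minus_theta_Ztheta_mult[of "-1" p]
    by (force simp: ipoly_N_poly_theta[OF assms])
qed

lemma Ztheta_cong_nat:
  assumes "prime p" and "z \<in> Ztheta p"
  obtains n where "n < p" and "z - of_nat n \<in> one_minus_theta_Ztheta p"
proof -
  have p: "p \<ge> 2"
    using assms(1) by (rule prime_ge_2_nat)
  obtain k :: int where k: "z - of_int k \<in> one_minus_theta_Ztheta p"
    using assms(2) by (rule Ztheta_cong_int)
  have multiple: "of_int (k div int p) * of_nat p \<in> one_minus_theta_Ztheta p"
    by (intro one_minus_theta_Ztheta_mult of_nat_p_in_one_minus_theta_Ztheta p) simp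
  have eq: "z - of_int (k mod int p) = (z - of_int k) + of_int (k div int p) * of_nat p"
  proof -
    have "(of_int k :: complex) = of_int (k div int p * int p + k mod int p)"
      by simp
    also have "\<dots> = of_int (k div int p) * of_nat p + of_int (k mod int p)"
      by (simp only: of_int_add of_int_mult of_int_of_nat_eq)
    finally show ?thesis
      by (simp add: algebra_simps)
  qed
  have "z - of_int (k mod int p) \<in> one_minus_theta_Ztheta p"
    unfolding eq by (rule one_minus_theta_Ztheta_add[OF k multiple])
  moreover have "0 \<le> k mod int p" "nat (k mod int p) < p"
    using p by (simp_all add: nat_less_iff)
  ultimately show thesis
    by (intro that[of "nat (k mod int p)"]) simp_all
qed

lemma one_minus_theta_pow_in_p_Ztheta:
  assumes "prime p"
  obtains W where "W \<in> Ztheta p" and "(1 - theta p) ^ (p - 1) = of_nat p * W"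
proof -
  obtain G where G: "pcompose (N_poly p) [:1, 1:] = monom 1 (p - 1) + smult (int p) G"
    using assms by (rule N_poly_shift_mod_p)
  define y where "y = theta p - 1"
  have "ipoly (pcompose (N_poly p) [:1, 1:]) y = ipoly (N_poly p) (theta p)"
    by (simp add: ipoly_pcompose ipoly_pCons ipoly_const y_def)
  also have "\<dots> = 0"
    using prime_ge_2_nat[OF assms] by (rule ipoly_N_poly_theta)
  finally have y_pow: "y ^ (p - 1) = - (of_nat p * ipoly G y)"
    unfolding G by (simp add: ipoly_add ipoly_monom ipoly_smult eq_neg_iff_add_eq_0)
  have sign: "(-1::complex) ^ p = - ((-1) ^ (p - 1))"
    using power_Suc[of "-1::complex" "p - 1"] prime_gt_0_nat[OF assms] by simp
  have "(1 - theta p) ^ (p - 1) = (-1) ^ (p - 1) * y ^ (p - 1)"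
    by (simp only: y_def power_minus[symmetric] minus_diff_eq)
  also have "\<dots> = of_nat p * ((-1) ^ p * ipoly G y)"
    unfolding y_pow sign by simp
  finally have "(1 - theta p) ^ (p - 1) = of_nat p * ((-1) ^ p * ipoly G y)" .
  moreover have "ipoly G y \<in> Ztheta p"
    using Ztheta_ipoly[of "pcompose G [:-1, 1:]" p]
    by (simp add: ipoly_pcompose ipoly_pCons ipoly_const y_def)
  ultimately show thesis
    by (intro that[of "(-1) ^ p * ipoly G y"]) auto
qed

lemma mult_one_minus_theta_pow_in_Ztheta_mono:
  assumes "z * (1 - theta p) ^ n \<in> Ztheta p" and "n \<le> m"
  shows "z * (1 - theta p) ^ m \<in> Ztheta p"
proof -
  have "z * (1 - theta p) ^ m = z * (1 - theta p) ^ n * (1 - theta p) ^ (m - n)"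
    using assms(2) by (simp flip: power_add mult.assoc)
  then show ?thesis
    by (simp only:) (intro Ztheta_mult[OF assms(1)] Ztheta_pow Ztheta_diff Ztheta_1 Ztheta_theta)
qed

lemma Ztheta_inv_p_iff:
  assumes "prime p"
  shows "z \<in> Ztheta_inv_p p \<longleftrightarrow> (\<exists>n. z * (1 - theta p) ^ n \<in> Ztheta p)"
proof
  assume "z \<in> Ztheta_inv_p p"
  then obtain c k where c: "c \<in> Ztheta p" "z = c / of_nat p ^ k"
    by (auto simp: Ztheta_inv_p_def)
  obtain W where W: "W \<in> Ztheta p" "(1 - theta p) ^ (p - 1) = of_nat p * W"
    using assms by (rule one_minus_theta_pow_in_p_Ztheta)
  have "(1 - theta p) ^ ((p - 1) * k) = (of_nat p * W) ^ k"
    by (simp only: power_mult W(2))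
  then have "z * (1 - theta p) ^ ((p - 1) * k) = c * W ^ k"
    using c(2) prime_gt_0_nat[OF assms] by (simp add: power_mult_distrib)
  with c(1) W(1) have "z * (1 - theta p) ^ ((p - 1) * k) \<in> Ztheta p"
    by auto
  then show "\<exists>n. z * (1 - theta p) ^ n \<in> Ztheta p" ..
next
  assume "\<exists>n. z * (1 - theta p) ^ n \<in> Ztheta p"
  then obtain n where n: "z * (1 - theta p) ^ n \<in> Ztheta p" ..
  obtain r where r: "r \<in> Ztheta p" "of_nat p = (1 - theta p) * r"
    using of_nat_p_in_one_minus_theta_Ztheta[OF prime_ge_2_nat[OF assms]]
    by (rule one_minus_theta_ZthetaE)
  have "r \<noteq> 0" "theta p \<noteq> 1"
    using r(2) prime_gt_0_nat[OF assms] theta_ne_1[OF prime_ge_2_nat[OF assms]] by auto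
  then have "z = z * (1 - theta p) ^ n * r ^ n / of_nat p ^ n"
    by (simp add: r(2) power_mult_distrib)
  with n r(1) show "z \<in> Ztheta_inv_p p"
    unfolding Ztheta_inv_p_def by blast
qed

lemma Ztheta_inv_p_add:
  assumes "prime p" and "z \<in> Ztheta_inv_p p" and "w \<in> Ztheta_inv_p p"
  shows "z + w \<in> Ztheta_inv_p p"
proof -
  obtain n m where z: "z * (1 - theta p) ^ n \<in> Ztheta p" and w: "w * (1 - theta p) ^ m \<in> Ztheta p"
    using assms by (auto simp: Ztheta_inv_p_iff)
  have "z * (1 - theta p) ^ (n + m) + w * (1 - theta p) ^ (n + m) \<in> Ztheta p"
    using mult_one_minus_theta_pow_in_Ztheta_mono[OF z, of "n + m"]
      mult_one_minus_theta_pow_in_Ztheta_mono[OF w, of "n + m"] by (intro Ztheta_add) simp_all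
  then have "(z + w) * (1 - theta p) ^ (n + m) \<in> Ztheta p"
    by (simp only: distrib_right)
  then show ?thesis
    using Ztheta_inv_p_iff[OF assms(1)] by blast
qed

lemma Ztheta_inv_p_mult:
  assumes "prime p" and "z \<in> Ztheta_inv_p p" and "w \<in> Ztheta_inv_p p"
  shows "z * w \<in> Ztheta_inv_p p"
proof -
  obtain n m where z: "z * (1 - theta p) ^ n \<in> Ztheta p" and w: "w * (1 - theta p) ^ m \<in> Ztheta p"
    using assms by (auto simp: Ztheta_inv_p_iff)
  have "z * w * (1 - theta p) ^ (n + m) = z * (1 - theta p) ^ n * (w * (1 - theta p) ^ m)"
    by (simp add: power_add mult_ac)
  also have "\<dots> \<in> Ztheta p"
    using z w by (rule Ztheta_mult)
  finally show ?thesis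
    using Ztheta_inv_p_iff[OF assms(1)] by blast
qed

lemma Ztheta_inv_p_common_denominator:
  assumes "prime p" and "finite S" and "\<forall>i\<in>S. f i \<in> Ztheta_inv_p p"
  obtains N where "\<forall>i\<in>S. f i * (1 - theta p) ^ N \<in> Ztheta p"
proof -
  from assms(2,3) have "\<exists>N. \<forall>i\<in>S. f i * (1 - theta p) ^ N \<in> Ztheta p"
  proof (induction S rule: finite_induct)
    case (insert j S)
    then obtain N n where N: "\<forall>i\<in>S. f i * (1 - theta p) ^ N \<in> Ztheta p"
        and n: "f j * (1 - theta p) ^ n \<in> Ztheta p"
      using assms(1) by (auto simp: Ztheta_inv_p_iff)
    have "\<forall>i\<in>insert j S. f i * (1 - theta p) ^ (N + n) \<in> Ztheta p"
      using N mult_one_minus_theta_pow_in_Ztheta_mono[OF n, of "N + n"]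
      by (auto intro: mult_one_minus_theta_pow_in_Ztheta_mono[where n = N])
    then show ?case ..
  qed simp
  then show thesis
    using that by blast
qed

lemma dsum_rep_zero: "(\<lambda>_. 0) \<in> dsum_rep p I"
  by (auto simp: dsum_rep_def Ztheta_inv_p_def intro!: exI[of _ 0])

lemma dsum_rep_add:
  assumes "prime p" and "f \<in> dsum_rep p I" and "g \<in> dsum_rep p I"
  shows "(\<lambda>i. f i + g i) \<in> dsum_rep p I"
proof -
  have "{i. f i + g i \<noteq> 0} \<subseteq> {i. f i \<noteq> 0} \<union> {i. g i \<noteq> 0}"
    by auto
  moreover have "finite ({i. f i \<noteq> 0} \<union> {i. g i \<noteq> 0})"
    using assms(2,3) by (simp add: dsum_rep_def)
  ultimately have "finite {i. f i + g i \<noteq> 0}"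
    by (rule finite_subset)
  moreover have "i \<in> I" if "f i + g i \<noteq> 0" for i
  proof (cases "f i = 0")
    case True
    with that have "g i \<noteq> 0"
      by simp
    with assms(3) show ?thesis
      by (simp add: dsum_rep_def)
  next
    case False
    with assms(2) show ?thesis
      by (simp add: dsum_rep_def)
  qed
  ultimately show ?thesis
    using assms by (auto simp: dsum_rep_def intro: Ztheta_inv_p_add[OF assms(1)])
qed

lemma dsum_rep_mult:
  assumes "prime p" and "c \<in> Ztheta_inv_p p" and "f \<in> dsum_rep p I"
  shows "(\<lambda>i. c * f i) \<in> dsum_rep p I"
proof -
  have "finite {i. c * f i \<noteq> 0}"
    by (rule finite_subset[of _ "{i. f i \<noteq> 0}"]) (use assms(3) in \<open>auto simp: dsum_rep_def\<close>)
  with assms show ?thesis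
    by (auto simp: dsum_rep_def intro: Ztheta_inv_p_mult[OF assms(1)])
qed

section \<open>Modules over \<open>\<int>[\<theta>]\<close>\<close>

lemma nmul_0 [simp]: "nmul 0 x = 0"
  by (simp add: nmul_def)

lemma nmul_Suc: "nmul (Suc n) x = x + nmul n x"
  by (simp add: nmul_def add.commute)

lemma nmul_add: "nmul (m + n) x = nmul m x + nmul n x"
  by (induction m) (simp_all add: nmul_Suc add.assoc)

lemma additive_nmul: "additive (nmul n)"
  by unfold_locales (induction n, simp_all add: nmul_Suc algebra_simps)

lemma nmul_mult: "nmul (m * n) x = nmul m (nmul n x)"
  by (induction m) (simp_all add: nmul_Suc nmul_add)

lemma (in additive) nmul_commute: "f (nmul n x) = nmul n (f x)"
  by (induction n) (simp_all add: nmul_Suc add zero)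

definition zmul :: "int \<Rightarrow> 'a::ab_group_add \<Rightarrow> 'a" where
  "zmul k x = nmul (nat k) x - nmul (nat (- k)) x"

lemma zmul_0 [simp]: "zmul 0 x = 0"
  by (simp add: zmul_def)

lemma zmul_1 [simp]: "zmul 1 x = x"
  by (simp add: zmul_def nmul_def)

lemma zmul_diff_of_nat: "zmul (int m - int n) x = nmul m x - nmul n x"
proof (cases "n \<le> m")
  case True
  then have "nmul m x = nmul (m - n) x + nmul n x"
    by (metis le_add_diff_inverse2 nmul_add)
  with True show ?thesis
    by (simp add: zmul_def nat_diff_distrib)
next
  case False
  then have "nmul n x = nmul (n - m) x + nmul m x"
    by (metis le_add_diff_inverse2 nmul_add nat_le_linear)
  with False show ?thesis
    by (simp add: zmul_def nat_diff_distrib)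
qed

lemma zmul_of_nat [simp]: "zmul (int n) x = nmul n x"
  by (simp add: zmul_def)

lemma zmul_add: "zmul (k + l) x = zmul k x + zmul l x"
proof -
  obtain m n m' n' where "k = int m - int n" "l = int m' - int n'"
    by (metis int_diff_cases)
  moreover have "int m - int n + (int m' - int n') = int (m + m') - int (n + n')"
    by simp
  ultimately show ?thesis
    by (simp only: zmul_diff_of_nat nmul_add) (simp add: algebra_simps)
qed

lemma additive_zmul: "additive (zmul k)"
  by unfold_locales (simp add: zmul_def additive.add[OF additive_nmul] algebra_simps)

lemma zmul_zero [simp]: "zmul k 0 = 0"
  by (rule additive.zero[OF additive_zmul])

lemma zmul_mult: "zmul (k * l) x = zmul k (zmul l x)"
proof -
  obtain m n m' n' where k: "k = int m - int n" and l: "l = int m' - int n'"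
    by (metis int_diff_cases)
  have "k * l = int (m * m' + n * n') - int (m * n' + n * m')"
    unfolding k l by (simp add: algebra_simps)
  then have L: "zmul (k * l) x
      = nmul (m * m') x + nmul (n * n') x - (nmul (m * n') x + nmul (n * m') x)"
    by (simp only: zmul_diff_of_nat nmul_add)
  have R: "zmul k (zmul l x)
      = nmul m (nmul m' x) - nmul m (nmul n' x) - (nmul n (nmul m' x) - nmul n (nmul n' x))"
    unfolding k l zmul_diff_of_nat additive.diff[OF additive_nmul] ..
  show ?thesis
    unfolding L R nmul_mult by (simp add: algebra_simps)
qed

lemma (in additive) zmul_commute: "f (zmul k x) = zmul k (f x)"
  by (simp add: zmul_def diff nmul_commute)

lemma additive_funpow: "additive f \<Longrightarrow> additive (f ^^ n)"
  for f :: "'a::ab_group_add \<Rightarrow> 'a"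
  by (induction n) (auto simp: additive_def)

lemma S_module_sum_funpow_eq_0:
  assumes "S_module p T" and "surj (\<lambda>x. x - T x)"
  shows "(\<Sum>k<p. (T ^^ k) x) = 0"
proof -
  have T: "additive T" "T ^^ p = id"
    using assms(1) by (auto simp: S_module_def additive_def)
  obtain y where "x = y - T y"
    using surjD[OF assms(2)] by blast
  then have "(\<Sum>k<p. (T ^^ k) x) = (\<Sum>k<p. (T ^^ k) y - (T ^^ Suc k) y)"
    by (simp add: additive.diff[OF additive_funpow[OF T(1)]] funpow_swap1)
  also have "\<dots> = (T ^^ 0) y - (T ^^ p) y"
    by (rule sum_lessThan_telescope')
  finally show ?thesis
    using T(2) by simp
qed

locale additive_endomorphism = T: additive T for T :: "'a::ab_group_add \<Rightarrow> 'a"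
begin

declare T.zero [simp]

definition poly_act :: "int poly \<Rightarrow> 'a \<Rightarrow> 'a" where
  "poly_act f x = fold_coeffs (\<lambda>c y. zmul c x + T y) f 0"

lemma poly_act_0 [simp]: "poly_act 0 x = 0"
  by (simp add: poly_act_def)

lemma poly_act_pCons: "poly_act (pCons c f) x = zmul c x + T (poly_act f x)"
  by (cases "f = 0 \<and> c = 0") (auto simp: poly_act_def)

lemma poly_act_add: "poly_act (f + g) x = poly_act f x + poly_act g x"
proof (induction f arbitrary: g)
  case (pCons c f)
  obtain d h where "g = pCons d h"
    by (cases g)
  then show ?case
    by (simp add: poly_act_pCons pCons.IH zmul_add T.add algebra_simps)
qed simp

lemma poly_act_diff: "poly_act (f - g) x = poly_act f x - poly_act g x"
  using poly_act_add[of "f - g" g x] by (simp add: algebra_simps)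

lemma additive_poly_act: "additive (poly_act f)"
  by unfold_locales
    (induction f, simp_all add: poly_act_pCons additive.add[OF additive_zmul] T.add algebra_simps)

lemma poly_act_smult: "poly_act (smult k f) x = zmul k (poly_act f x)"
  by (induction f)
    (simp_all add: poly_act_pCons zmul_mult T.zmul_commute additive.add[OF additive_zmul])

lemma poly_act_mult: "poly_act (f * g) x = poly_act f (poly_act g x)"
proof (induction f)
  case (pCons c f)
  have "pCons c f * g = smult c g + pCons 0 (f * g)"
    by simp
  then show ?case
    by (simp only: poly_act_add poly_act_smult poly_act_pCons pCons.IH) simp
qed simp

lemma poly_act_const: "poly_act [:c:] x = zmul c x"
  by (simp add: poly_act_pCons)

lemma poly_act_monom_1: "poly_act (monom 1 k) x = (T ^^ k) x"
  by (induction k) (simp_all add: monom_0 monom_Suc poly_act_pCons poly_act_const)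

end

locale Ztheta_module = additive_endomorphism T for T :: "'a::ab_group_add \<Rightarrow> 'a" +
  fixes p :: nat
  assumes prime_p: "prime p"
    and sum_funpow_eq_0: "(\<Sum>k<p. (T ^^ k) x) = 0"
begin

lemma poly_act_N_poly: "poly_act (N_poly p) x = 0"
proof -
  have add: "additive (\<lambda>f. poly_act f x)"
    by unfold_locales (rule poly_act_add)
  show ?thesis
    by (simp add: N_poly_def additive.sum[OF add] poly_act_monom_1 sum_funpow_eq_0)
qed

lemma poly_act_eq_if_ipoly_theta_eq:
  assumes "ipoly f (theta p) = ipoly g (theta p)"
  shows "poly_act f x = poly_act g x"
proof -
  have "N_poly p dvd f - g"
    using assms by (intro N_poly_dvd_if_theta_root prime_p) (simp add: ipoly_diff)
  then obtain h where "f - g = h * N_poly p"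
    by (metis dvdE mult.commute)
  then have "poly_act (f - g) x = 0"
    by (simp add: poly_act_mult poly_act_N_poly additive.zero[OF additive_poly_act])
  then show ?thesis
    by (simp add: poly_act_diff)
qed

definition smul :: "complex \<Rightarrow> 'a \<Rightarrow> 'a" where
  "smul z = poly_act (SOME f. ipoly f (theta p) = z)"

lemma smul_ipoly: "smul (ipoly f (theta p)) = poly_act f"
proof
  fix x
  have "ipoly (SOME g. ipoly g (theta p) = ipoly f (theta p)) (theta p) = ipoly f (theta p)"
    by (rule someI[of _ f]) (rule refl)
  then show "smul (ipoly f (theta p)) x = poly_act f x"
    unfolding smul_def by (rule poly_act_eq_if_ipoly_theta_eq)
qed

lemma additive_smul: "z \<in> Ztheta p \<Longrightarrow> additive (smul z)"
  by (elim ZthetaE) (simp add: smul_ipoly additive_poly_act)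

lemma smul_add: "z \<in> Ztheta p \<Longrightarrow> w \<in> Ztheta p \<Longrightarrow> smul (z + w) x = smul z x + smul w x"
  by (elim ZthetaE) (simp add: smul_ipoly poly_act_add flip: ipoly_add)

lemma smul_mult: "z \<in> Ztheta p \<Longrightarrow> w \<in> Ztheta p \<Longrightarrow> smul (z * w) x = smul z (smul w x)"
  by (elim ZthetaE) (simp add: smul_ipoly poly_act_mult flip: ipoly_mult)

lemma smul_commute: "z \<in> Ztheta p \<Longrightarrow> w \<in> Ztheta p \<Longrightarrow> smul z (smul w x) = smul w (smul z x)"
  using smul_mult[of z w x] smul_mult[of w z x] by (simp add: mult.commute)

lemma smul_of_int: "smul (of_int k) x = zmul k x"
  using fun_cong[OF smul_ipoly[of "[:k:]"]] by (simp add: ipoly_const poly_act_const)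

lemma smul_of_nat: "smul (of_nat n) x = nmul n x"
  using smul_of_int[of "int n" x] by simp

lemma smul_1 [simp]: "smul 1 x = x"
  using smul_of_nat[of 1 x] by (simp add: nmul_Suc)

lemma smul_theta: "smul (theta p) x = T x"
  using fun_cong[OF smul_ipoly[of "[:0, 1:]"]] by (simp add: ipoly_pCons ipoly_const poly_act_pCons poly_act_const)

lemma smul_one_minus_theta: "smul (1 - theta p) x = x - T x"
  using fun_cong[OF smul_ipoly[of "[:1, -1:]"]]
  by (simp add: ipoly_pCons ipoly_const poly_act_pCons poly_act_const zmul_def nmul_Suc T.minus)

lemma smul_fixed_point_eq_0:
  assumes "T x = x" and "z \<in> one_minus_theta_Ztheta p"
  shows "smul z x = 0"
proof -
  obtain r where "r \<in> Ztheta p" "z = r * (1 - theta p)"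
    using assms(2) by (auto elim: one_minus_theta_ZthetaE simp: mult.commute)
  then show ?thesis
    using assms(1) by (simp add: smul_mult smul_one_minus_theta additive.zero[OF additive_smul])
qed

lemma nmul_p_fixed_point:
  assumes "T x = x"
  shows "nmul p x = 0"
proof -
  have "(T ^^ k) x = x" for k
    using assms by (induction k) simp_all
  then show ?thesis
    using sum_funpow_eq_0[of x] by (simp add: nmul_def)
qed

context
  fixes I :: "'i set" and e :: "'i \<Rightarrow> 'a"
  assumes basis: "is_Zp_basis_of_fix p T I e"
begin

lemma basis_fixed: "i \<in> I \<Longrightarrow> T (e i) = e i"
  using basis by (simp add: is_Zp_basis_of_fix_def)

lemma basis_independent:
  assumes "finite S" and "S \<subseteq> I" and "\<forall>i\<in>S. c i < p"
    and "(\<Sum>i\<in>S. nmul (c i) (e i)) = 0"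
  shows "\<forall>i\<in>S. c i = 0"
proof -
  define c' where "c' i = (if i \<in> S then c i else 0)" for i
  let ?rep = "\<lambda>c. (\<forall>i. c i < p) \<and> (\<forall>i. c i \<noteq> 0 \<longrightarrow> i \<in> I) \<and> finite {i. c i \<noteq> 0}
      \<and> 0 = (\<Sum>i\<in>{i. c i \<noteq> 0}. nmul (c i) (e i))"
  have "T 0 = 0 \<longrightarrow> (\<exists>!c. ?rep c)"
    using basis unfolding is_Zp_basis_of_fix_def by (rule conjunct2[THEN spec])
  then have "\<exists>!c. ?rep c"
    using T.zero by (rule mp)
  then obtain c0 where c0: "\<And>d. ?rep d \<Longrightarrow> d = c0"
    by (elim ex1E) blast
  have "?rep (\<lambda>_. 0)"
    using prime_gt_0_nat[OF prime_p] by simp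
  moreover have "?rep c'"
  proof -
    have supp: "{i. c' i \<noteq> 0} \<subseteq> S"
      by (auto simp: c'_def)
    have "(\<Sum>i\<in>{i. c' i \<noteq> 0}. nmul (c' i) (e i)) = (\<Sum>i\<in>S. nmul (c' i) (e i))"
      using supp assms(1) by (intro sum.mono_neutral_left) auto
    also have "\<dots> = 0"
      using assms(4) by (simp add: c'_def)
    finally show ?thesis
      using supp assms(1-3) prime_gt_0_nat[OF prime_p] by (auto simp: c'_def intro: finite_subset)
  qed
  ultimately have "c' = (\<lambda>_. 0)"
    using c0[of c'] c0[of "\<lambda>_. 0"] by simp
  show ?thesis
  proof
    fix i assume "i \<in> S"
    then show "c i = 0"
      using fun_cong[OF \<open>c' = (\<lambda>_. 0)\<close>, of i] by (simp add: c'_def)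
  qed
qed

lemma basis_relation_coeffs_in_one_minus_theta_Ztheta:
  assumes "finite S" and "S \<subseteq> I" and "\<forall>i\<in>S. b i \<in> Ztheta p"
    and "(\<Sum>i\<in>S. smul (b i) (e i)) = 0"
  shows "\<forall>i\<in>S. b i \<in> one_minus_theta_Ztheta p"
proof -
  have "\<forall>i\<in>S. \<exists>n. n < p \<and> b i - of_nat n \<in> one_minus_theta_Ztheta p"
  proof
    fix i assume "i \<in> S"
    with assms(3) show "\<exists>n. n < p \<and> b i - of_nat n \<in> one_minus_theta_Ztheta p"
      by (auto intro: Ztheta_cong_nat[OF prime_p, of "b i"])
  qed
  from bchoice[OF this] obtain c
    where c: "\<forall>i\<in>S. c i < p \<and> b i - of_nat (c i) \<in> one_minus_theta_Ztheta p"
    by blast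
  have "smul (b i) (e i) = nmul (c i) (e i)" if "i \<in> S" for i
  proof -
    have "smul (b i) (e i) = smul (of_nat (c i) + (b i - of_nat (c i))) (e i)"
      by simp
    also have "\<dots> = smul (of_nat (c i)) (e i) + smul (b i - of_nat (c i)) (e i)"
      using c that one_minus_theta_Ztheta_subset by (intro smul_add) auto
    also have "smul (b i - of_nat (c i)) (e i) = 0"
      using c that assms(2) by (auto intro: smul_fixed_point_eq_0 basis_fixed)
    finally show ?thesis
      by (simp add: smul_of_nat)
  qed
  then have "(\<Sum>i\<in>S. nmul (c i) (e i)) = 0"
    using assms(4) by simp
  then have "\<forall>i\<in>S. c i = 0"
    using assms(1,2) c by (intro basis_independent) auto
  with c show ?thesis
    by auto
qed

end

end

section \<open>The map \<open>\<psi>\<close>\<close>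

locale divisible_Ztheta_module = Ztheta_module +
  assumes surj_one_minus_T: "surj (\<lambda>x. x - T x)"
begin

text \<open>\<open>chain e n\<close> plays the role of \<open>(1 - \<theta>)\<^sup>-\<^sup>n e\<close>: it is an \<open>n\<close>-fold preimage of \<open>e\<close>
  under \<open>1 - T\<close>, and \<open>Psi e\<close> maps \<open>a / (1 - \<theta>)\<^sup>n\<close> to \<open>a \<cdot> chain e n\<close>.\<close>

definition chain :: "'a \<Rightarrow> nat \<Rightarrow> 'a" where
  "chain e n = (inv (\<lambda>x. x - T x) ^^ n) e"

lemma chain_0 [simp]: "chain e 0 = e"
  by (simp add: chain_def)

lemma smul_one_minus_theta_chain_Suc: "smul (1 - theta p) (chain e (Suc n)) = chain e n"
  using surj_f_inv_f[OF surj_one_minus_T] by (simp add: chain_def smul_one_minus_theta)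

lemma smul_one_minus_theta_pow_chain: "smul ((1 - theta p) ^ k) (chain e (n + k)) = chain e n"
proof (induction k)
  case (Suc k)
  have "smul ((1 - theta p) ^ Suc k) (chain e (n + Suc k))
      = smul ((1 - theta p) ^ k) (smul (1 - theta p) (chain e (Suc (n + k))))"
    by (simp only: power_Suc2 add_Suc_right smul_mult[OF Ztheta_pow Ztheta_one_minus_theta]
        Ztheta_one_minus_theta)
  also have "\<dots> = chain e n"
    by (simp add: smul_one_minus_theta_chain_Suc Suc.IH)
  finally show ?case .
qed simp

definition Psi :: "'a \<Rightarrow> complex \<Rightarrow> 'a" where
  "Psi e z = (let n = SOME n. z * (1 - theta p) ^ n \<in> Ztheta p
              in smul (z * (1 - theta p) ^ n) (chain e n))"

lemma smul_chain_eq: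
  assumes "z * (1 - theta p) ^ n \<in> Ztheta p" and "n \<le> m"
  shows "smul (z * (1 - theta p) ^ m) (chain e m) = smul (z * (1 - theta p) ^ n) (chain e n)"
proof -
  have "(1 - theta p) ^ m = (1 - theta p) ^ n * (1 - theta p) ^ (m - n)"
    using assms(2) by (simp flip: power_add)
  then have "smul (z * (1 - theta p) ^ m) (chain e m)
      = smul (z * (1 - theta p) ^ n * (1 - theta p) ^ (m - n)) (chain e (n + (m - n)))"
    using assms(2) by (simp add: mult.assoc)
  also have "\<dots> = smul (z * (1 - theta p) ^ n) (smul ((1 - theta p) ^ (m - n)) (chain e (n + (m - n))))"
    using assms(1) by (intro smul_mult) auto
  also have "\<dots> = smul (z * (1 - theta p) ^ n) (chain e n)"
    by (simp only: smul_one_minus_theta_pow_chain)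
  finally show ?thesis .
qed

lemma Psi_eq:
  assumes "z * (1 - theta p) ^ n \<in> Ztheta p"
  shows "Psi e z = smul (z * (1 - theta p) ^ n) (chain e n)"
proof -
  define m where "m = (SOME n. z * (1 - theta p) ^ n \<in> Ztheta p)"
  have m: "z * (1 - theta p) ^ m \<in> Ztheta p"
    unfolding m_def using assms by (rule someI)
  have "Psi e z = smul (z * (1 - theta p) ^ m) (chain e m)"
    by (simp add: Psi_def m_def Let_def)
  also have "\<dots> = smul (z * (1 - theta p) ^ n) (chain e n)"
    using smul_chain_eq[OF assms, of m] smul_chain_eq[OF m, of n] by (cases "n \<le> m") simp_all
  finally show ?thesis .
qed

lemma Psi_Ztheta: "z \<in> Ztheta p \<Longrightarrow> Psi e z = smul z e"
  using Psi_eq[of z 0] by simp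

lemma Psi_0 [simp]: "Psi e 0 = 0"
  using Psi_Ztheta[of 0] smul_of_nat[of 0] by simp

lemma Psi_add:
  assumes "z \<in> Ztheta_inv_p p" and "w \<in> Ztheta_inv_p p"
  shows "Psi e (z + w) = Psi e z + Psi e w"
proof -
  obtain k l where zk: "z * (1 - theta p) ^ k \<in> Ztheta p" and wl: "w * (1 - theta p) ^ l \<in> Ztheta p"
    using assms by (auto simp: Ztheta_inv_p_iff[OF prime_p])
  define n where "n = k + l"
  have n: "z * (1 - theta p) ^ n \<in> Ztheta p" "w * (1 - theta p) ^ n \<in> Ztheta p"
    using mult_one_minus_theta_pow_in_Ztheta_mono[OF zk, of n]
      mult_one_minus_theta_pow_in_Ztheta_mono[OF wl, of n] by (simp_all add: n_def)
  then have "Psi e (z + w) = smul (z * (1 - theta p) ^ n + w * (1 - theta p) ^ n) (chain e n)"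
    by (simp add: Psi_eq[of _ n] Ztheta_add distrib_right)
  with n show ?thesis
    by (simp add: smul_add Psi_eq[of _ n])
qed

lemma Psi_mult:
  assumes "c \<in> Ztheta p" and "z \<in> Ztheta_inv_p p"
  shows "Psi e (c * z) = smul c (Psi e z)"
proof -
  obtain n where n: "z * (1 - theta p) ^ n \<in> Ztheta p"
    using assms(2) by (auto simp: Ztheta_inv_p_iff[OF prime_p])
  then have "c * z * (1 - theta p) ^ n \<in> Ztheta p"
    using assms(1) by (simp add: mult.assoc Ztheta_mult)
  with n assms(1) show ?thesis
    by (simp add: Psi_eq smul_mult mult.assoc)
qed

definition psi :: "('i \<Rightarrow> 'a) \<Rightarrow> ('i \<Rightarrow> complex) \<Rightarrow> 'a" where
  "psi e f = (\<Sum>i | f i \<noteq> 0. Psi (e i) (f i))"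

lemma psi_eq_sum:
  assumes "finite S" and "{i. f i \<noteq> 0} \<subseteq> S"
  shows "psi e f = (\<Sum>i\<in>S. Psi (e i) (f i))"
  unfolding psi_def using assms by (intro sum.mono_neutral_left) auto

lemma psi_zero: "psi e (\<lambda>_. 0) = 0"
  by (simp add: psi_def)

lemma psi_add:
  assumes "f \<in> dsum_rep p I" and "g \<in> dsum_rep p I"
  shows "psi e (\<lambda>i. f i + g i) = psi e f + psi e g"
proof -
  let ?S = "{i. f i \<noteq> 0} \<union> {i. g i \<noteq> 0}"
  have fin: "finite ?S"
    using assms by (simp add: dsum_rep_def)
  have "psi e (\<lambda>i. f i + g i) = (\<Sum>i\<in>?S. Psi (e i) (f i + g i))"
    using fin by (rule psi_eq_sum) auto
  also have "\<dots> = (\<Sum>i\<in>?S. Psi (e i) (f i) + Psi (e i) (g i))"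
    using assms by (intro sum.cong) (auto simp: dsum_rep_def Psi_add)
  also have "\<dots> = (\<Sum>i\<in>?S. Psi (e i) (f i)) + (\<Sum>i\<in>?S. Psi (e i) (g i))"
    by (rule sum.distrib)
  also have "\<dots> = psi e f + psi e g"
    using fin by (simp add: psi_eq_sum[of ?S f] psi_eq_sum[of ?S g])
  finally show ?thesis .
qed

lemma psi_mult:
  assumes "c \<in> Ztheta p" and "f \<in> dsum_rep p I"
  shows "psi e (\<lambda>i. c * f i) = smul c (psi e f)"
proof -
  let ?S = "{i. f i \<noteq> 0}"
  have fin: "finite ?S"
    using assms by (simp add: dsum_rep_def)
  have "psi e (\<lambda>i. c * f i) = (\<Sum>i\<in>?S. Psi (e i) (c * f i))"
    using fin by (rule psi_eq_sum) auto
  also have "\<dots> = (\<Sum>i\<in>?S. smul c (Psi (e i) (f i)))"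
    using assms by (intro sum.cong) (auto simp: dsum_rep_def Psi_mult)
  also have "\<dots> = smul c (psi e f)"
    using assms(1) by (simp add: psi_def additive.sum[OF additive_smul])
  finally show ?thesis .
qed

context
  fixes I :: "'i set" and e :: "'i \<Rightarrow> 'a"
  assumes basis: "is_Zp_basis_of_fix p T I e"
begin

lemma chain_relation_coeffs_in_one_minus_theta_pow:
  assumes "finite S" and "S \<subseteq> I" and "\<forall>i\<in>S. A i \<in> Ztheta p"
    and "(\<Sum>i\<in>S. smul (A i) (chain (e i) N)) = 0"
  shows "\<forall>i\<in>S. \<exists>r\<in>Ztheta p. A i = (1 - theta p) ^ Suc N * r"
  using assms(3,4)
proof (induction N arbitrary: A)
  case 0
  then have "\<forall>i\<in>S. A i \<in> one_minus_theta_Ztheta p"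
    using basis_relation_coeffs_in_one_minus_theta_Ztheta[OF basis assms(1,2)] by simp
  then show ?case
    by (auto simp: one_minus_theta_Ztheta_def)
next
  case (Suc N)
  have "(\<Sum>i\<in>S. smul (A i) (chain (e i) N))
      = smul (1 - theta p) (\<Sum>i\<in>S. smul (A i) (chain (e i) (Suc N)))"
    using Suc.prems(1)
    by (simp add: additive.sum[OF additive_smul] smul_commute smul_one_minus_theta_chain_Suc)
  also have "\<dots> = 0"
    using Suc.prems(2) additive.zero[OF additive_smul] by simp
  finally have "\<forall>i\<in>S. \<exists>r\<in>Ztheta p. A i = (1 - theta p) ^ Suc N * r"
    by (rule Suc.IH[OF Suc.prems(1)])
  then have "\<forall>i\<in>S. \<exists>r. r \<in> Ztheta p \<and> A i = (1 - theta p) ^ Suc N * r"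
    by blast
  from bchoice[OF this] obtain r
    where r: "\<forall>i\<in>S. r i \<in> Ztheta p \<and> A i = (1 - theta p) ^ Suc N * r i"
    by blast
  have "smul (A i) (chain (e i) (Suc N)) = smul (r i) (e i)" if "i \<in> S" for i
  proof -
    have ri: "r i \<in> Ztheta p" and "A i = r i * (1 - theta p) ^ Suc N"
      using r that by (simp_all add: mult.commute)
    then have "smul (A i) (chain (e i) (Suc N))
        = smul (r i) (smul ((1 - theta p) ^ Suc N) (chain (e i) (0 + Suc N)))"
      by (simp only: smul_mult[OF ri Ztheta_pow[OF Ztheta_one_minus_theta]] add_0)
    also have "\<dots> = smul (r i) (e i)"
      by (simp only: smul_one_minus_theta_pow_chain chain_0)
    finally show ?thesis .
  qed
  then have "(\<Sum>i\<in>S. smul (r i) (e i)) = 0"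
    using Suc.prems(2) by simp
  then have "\<forall>i\<in>S. r i \<in> one_minus_theta_Ztheta p"
    using basis_relation_coeffs_in_one_minus_theta_Ztheta[OF basis assms(1,2)] r by blast
  with r show ?case
    by (auto elim!: one_minus_theta_ZthetaE)
qed

lemma psi_eq_0_if:
  assumes "f \<in> dsum_rep p I" and om: "\<forall>i. f i \<in> one_minus_theta_Ztheta p"
  shows "psi e f = 0"
proof -
  have "Psi (e i) (f i) = 0" if "f i \<noteq> 0" for i
  proof -
    have "i \<in> I"
      using assms that by (simp add: dsum_rep_def)
    moreover have "f i \<in> Ztheta p"
      using om one_minus_theta_Ztheta_subset by blast
    ultimately show ?thesis
      using om by (simp add: Psi_Ztheta smul_fixed_point_eq_0 basis_fixed[OF basis])
  qed
  then show ?thesis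
    by (simp add: psi_def)
qed

lemma one_minus_theta_Ztheta_if_psi_eq_0:
  assumes "f \<in> dsum_rep p I" and psi0: "psi e f = 0"
  shows "\<forall>i. f i \<in> one_minus_theta_Ztheta p"
proof -
  define S where "S = {i. f i \<noteq> 0}"
  have S: "finite S" "S \<subseteq> I" "\<forall>i\<in>S. f i \<in> Ztheta_inv_p p"
    using assms by (auto simp: S_def dsum_rep_def)
  obtain N where N: "\<forall>i\<in>S. f i * (1 - theta p) ^ N \<in> Ztheta p"
    using Ztheta_inv_p_common_denominator[OF prime_p S(1,3)] by blast
  have "(\<Sum>i\<in>S. smul (f i * (1 - theta p) ^ N) (chain (e i) N)) = psi e f"
    unfolding psi_def S_def[symmetric] using N by (intro sum.cong refl) (simp add: Psi_eq[of _ N])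
  then have "(\<Sum>i\<in>S. smul (f i * (1 - theta p) ^ N) (chain (e i) N)) = 0"
    using psi0 by simp
  then have rel: "\<forall>i\<in>S. \<exists>r\<in>Ztheta p. f i * (1 - theta p) ^ N = (1 - theta p) ^ Suc N * r"
    using chain_relation_coeffs_in_one_minus_theta_pow[OF S(1,2), of "\<lambda>i. f i * (1 - theta p) ^ N" N] N
    by blast
  have nz: "(1 - theta p) ^ N \<noteq> 0"
    using theta_ne_1[OF prime_ge_2_nat[OF prime_p]] by simp
  show ?thesis
  proof
    fix i
    show "f i \<in> one_minus_theta_Ztheta p"
    proof (cases "i \<in> S")
      case True
      then obtain r where r: "r \<in> Ztheta p" "f i * (1 - theta p) ^ N = (1 - theta p) ^ Suc N * r"
        using rel by blast
      then have "f i * (1 - theta p) ^ N = ((1 - theta p) * r) * (1 - theta p) ^ N"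
        by (simp add: mult_ac)
      then have "f i = (1 - theta p) * r"
        using mult_right_cancel[OF nz] by blast
      with r(1) show ?thesis
        by (simp add: one_minus_theta_ZthetaI)
    next
      case False
      then show ?thesis
        using one_minus_theta_ZthetaI[OF Ztheta_0, of p] by (simp add: S_def)
    qed
  qed
qed

lemma psi_eq_0_iff:
  "f \<in> dsum_rep p I \<Longrightarrow> psi e f = 0 \<longleftrightarrow> (\<forall>i. f i \<in> one_minus_theta_Ztheta p)"
  using psi_eq_0_if one_minus_theta_Ztheta_if_psi_eq_0 by blast

lemma range_psi_if_smul_one_minus_theta_pow_eq_0:
  "smul ((1 - theta p) ^ k) z = 0 \<Longrightarrow> z \<in> psi e ` dsum_rep p I"
proof (induction k arbitrary: z)
  case 0
  then show ?case
    using dsum_rep_zero psi_zero by (metis image_eqI power_0 smul_1)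
next
  case (Suc k)
  have "smul ((1 - theta p) ^ k) (smul (1 - theta p) z) = 0"
    using Suc.prems
    by (simp only: power_Suc2 smul_mult[OF Ztheta_pow Ztheta_one_minus_theta] Ztheta_one_minus_theta)
  then obtain f where f: "f \<in> dsum_rep p I" "smul (1 - theta p) z = psi e f"
    using Suc.IH by blast
  define g where "g i = 1 / (1 - theta p) * f i" for i
  have g: "g \<in> dsum_rep p I"
    unfolding g_def using prime_p f(1) by (intro dsum_rep_mult) (auto simp: Ztheta_inv_p_iff intro!: exI[of _ 1])
  have "(\<lambda>i. (1 - theta p) * g i) = f"
    using theta_ne_1[OF prime_ge_2_nat[OF prime_p]] by (simp add: g_def)
  then have "smul (1 - theta p) (z - psi e g) = 0"
    using f(2) psi_mult[OF Ztheta_one_minus_theta g] by (simp add: additive.diff[OF additive_smul])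
  then have "T (z - psi e g) = z - psi e g"
    by (simp add: smul_one_minus_theta)
  then obtain c where c: "\<forall>i. c i \<noteq> 0 \<longrightarrow> i \<in> I" "finite {i. c i \<noteq> 0}"
      "z - psi e g = (\<Sum>i | c i \<noteq> 0. nmul (c i) (e i))"
    using basis unfolding is_Zp_basis_of_fix_def by blast
  define h where "h i = (of_nat (c i) :: complex)" for i
  have h: "h \<in> dsum_rep p I"
    using c(1,2) Ztheta_inv_p_iff[OF prime_p] by (auto simp: h_def dsum_rep_def intro: exI[of _ 0])
  have "psi e h = (\<Sum>i | c i \<noteq> 0. nmul (c i) (e i))"
    by (simp add: psi_def h_def Psi_Ztheta smul_of_nat)
  then have "z = psi e (\<lambda>i. h i + g i)"
    using c(3) psi_add[OF h g] by (simp add: algebra_simps)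
  then show ?case
    using dsum_rep_add[OF prime_p h g] by blast
qed

lemma uniquely_p_divisible_cokernel_psi:
  "uniquely_p_divisible_cokernel p (psi e ` dsum_rep p I)"
  unfolding uniquely_p_divisible_cokernel_def
proof (intro conjI allI impI)
  obtain W where W: "W \<in> Ztheta p" "(1 - theta p) ^ (p - 1) = of_nat p * W"
    using prime_p by (rule one_minus_theta_pow_in_p_Ztheta)
  fix x
  have "nmul p (smul W (chain x (p - 1))) = x"
    using W smul_one_minus_theta_pow_chain[of "p - 1" x 0]
    by (simp flip: smul_of_nat smul_mult)
  then show "\<exists>y. nmul p y - x \<in> psi e ` dsum_rep p I"
    using dsum_rep_zero psi_zero by (metis diff_self image_eqI)
next
  obtain W where W: "W \<in> Ztheta p" "(1 - theta p) ^ (p - 1) = of_nat p * W"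
    using prime_p by (rule one_minus_theta_pow_in_p_Ztheta)
  fix y
  assume "nmul p y \<in> psi e ` dsum_rep p I"
  then obtain f where f: "f \<in> dsum_rep p I" "nmul p y = psi e f"
    by blast
  define g where "g i = 1 / of_nat p * f i" for i
  have g: "g \<in> dsum_rep p I"
    unfolding g_def using prime_p f(1)
    by (intro dsum_rep_mult) (auto simp: Ztheta_inv_p_def intro!: exI[of _ 1] exI[of _ "Suc 0"])
  have "(\<lambda>i. of_nat p * g i) = f"
    using prime_gt_0_nat[OF prime_p] by (simp add: g_def)
  then have "psi e f = nmul p (psi e g)"
    using psi_mult[OF Ztheta_of_nat[of p p] g] by (simp add: smul_of_nat)
  then have "nmul p (y - psi e g) = 0"
    using f(2) by (simp add: additive.diff[OF additive_nmul])
  then have "smul ((1 - theta p) ^ (p - 1)) (y - psi e g) = 0"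
    using W by (simp add: mult.commute smul_mult smul_of_nat additive.zero[OF additive_smul])
  then obtain h where h: "h \<in> dsum_rep p I" "y - psi e g = psi e h"
    using range_psi_if_smul_one_minus_theta_pow_eq_0 by blast
  then have "y = psi e (\<lambda>i. h i + g i)"
    using psi_add[OF h(1) g] by (simp add: algebra_simps)
  then show "y \<in> psi e ` dsum_rep p I"
    using dsum_rep_add[OF prime_p h(1) g] by blast
qed

end

end

theorem lemma6p8:
  fixes p :: nat and T :: "'a::ab_group_add \<Rightarrow> 'a"
  assumes "prime p"
    and "S_module p T"
    and "surj (\<lambda>x. x - T x)"
  shows "(\<forall>x. (\<Sum>k<p. (T ^^ k) x) = 0)
       \<and> (\<forall>x. T x = x \<longrightarrow> nmul p x = 0)
       \<and> (\<forall>(I :: 'i set) (e :: 'i \<Rightarrow> 'a). is_Zp_basis_of_fix p T I e \<longrightarrow>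
            (\<exists>\<psi> :: ('i \<Rightarrow> complex) \<Rightarrow> 'a.
               (\<forall>f\<in>dsum_rep p I. \<forall>g\<in>dsum_rep p I. \<psi> (\<lambda>i. f i + g i) = \<psi> f + \<psi> g)
             \<and> (\<forall>f\<in>dsum_rep p I. \<psi> (\<lambda>i. theta p * f i) = T (\<psi> f))
             \<and> (\<forall>f\<in>dsum_rep p I. \<psi> f = 0 \<longleftrightarrow> (\<forall>i. f i \<in> one_minus_theta_Ztheta p))
             \<and> uniquely_p_divisible_cokernel p (\<psi> ` dsum_rep p I)))"
proof -
  have N_T: "\<forall>x. (\<Sum>k<p. (T ^^ k) x) = 0"
    using assms(2,3) S_module_sum_funpow_eq_0 by blast
  have "T (x + y) = T x + T y" for x y
    using assms(2) by (simp add: S_module_def)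
  then interpret divisible_Ztheta_module T p
    using assms(1,3) N_T by unfold_locales simp_all
  show ?thesis
    apply (intro conjI allI impI)
    subgoal using N_T by blast
    subgoal by (rule nmul_p_fixed_point)
    subgoal for I e
      by (intro exI[of _ "psi e"] conjI ballI psi_add psi_eq_0_iff uniquely_p_divisible_cokernel_psi)
        (simp_all add: psi_mult smul_theta)
    done
qed

end
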